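(* Let $P_1,\dots,P_M$ be monic real polynomials with $P_\ell(0)=1$, and suppose that for each $\ell$ there is an exponent $s_\ell$ such that the coefficient of $x^{s_\ell}$ in $P_\ell$ is a differentiable function $p_\ell(z)\ge 0$ of a variable $z>0$, while all other coefficients of $P_\ell$ are nonnegative constants. Let $y_1,\dots,y_M\in\mathcal C$ and $c_1,\dots,c_M\in\mathbb Q$ be such that $\sum_{\ell=1}^Mc_\ell\big(y_\ell(z)\wedge P_\ell(y_\ell(z))\big)=0$ in $\bigwedge^2\mathcal C$ (here $z\mapsto P_\ell(y_\ell(z))$ is viewed as an element of $\mathcal C$, with the coefficient $p_\ell$ evaluated at $z$). Then $$\frac{d}{dz}\sum_{\ell=1}^Mc_\ell\tilde L_{P_\ell}\big(y_\ell(z)\big)=\sum_{\ell=1}^Mc_\ell\frac{dp_\ell}{dz}\int_0^{y_\ell(z)}\frac{y^{s_\ell-1}}{P_\ell(y)}\,dy,$$ where on the left $P_\ell$ also depends on $z$ through $p_\ell$.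
   Context: $\mathcal C$ is the set of differentiable functions $\mathbb R_{>0}\to\mathbb R_{>0}$, regarded as an abelian group under pointwise multiplication. $\mathcal C\otimes\mathcal C$ denotes the rational vector space $\mathbb Q\otimes_{\mathbb Z}(\mathcal C\otimes_{\mathbb Z}\mathcal C)$; $\bigwedge^2\mathcal C=(\mathcal C\otimes\mathcal C)/S^2\mathcal C$, where $S^2\mathcal C$ is the subspace spanned by all $h\otimes h$, and $y_1\wedge y_2$ is the class of $y_1\otimes y_2$. For a monic polynomial $P$ with nonnegative coefficients and $P(0)=1$, $\tilde L_P(x)=\frac12\int_0^x\Big(\frac{\log P(y)}{y}-\frac{\log y}{P(y)}P'(y)\Big)dy$ for $x>0$; equivalently $\tilde L_P(x)=\int_0^x\frac{\log P(y)}{y}dy-\frac12\log x\log P(x)$. *)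

theory Defs
  imports "HOL-Analysis.Analysis" "HOL-Computational_Algebra.Polynomial"
begin

(* The group C: differentiable positive functions on (0,oo).  Each element is
   represented canonically by a function real => real that is 1 on (-oo,0]. *)
definition Cset :: "(real \<Rightarrow> real) set" where
  "Cset = {f. (\<forall>x>0. 0 < f x \<and> f differentiable (at x)) \<and> (\<forall>x\<le>0. f x = 1)}"

definition cnorm :: "(real \<Rightarrow> real) \<Rightarrow> (real \<Rightarrow> real)" where
  "cnorm f = (\<lambda>x. if 0 < x then f x else 1)"

definition cmul :: "(real \<Rightarrow> real) \<Rightarrow> (real \<Rightarrow> real) \<Rightarrow> (real \<Rightarrow> real)" where
  "cmul f g = (\<lambda>x. f x * g x)"

(* free Q-vector space on C x C: finitely supported functions to rat; basis vectors *)
definition fsingle :: "'a \<Rightarrow> 'a \<Rightarrow> rat" where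
  "fsingle a = (\<lambda>q. if q = a then 1 else 0)"

(* generators of the kernel of  Q[C x C] -> Q (x)_Z (C (x)_Z C) / S^2 C = wedge^2 C :
   bi-additivity relations and the relations h (x) h *)
definition wedge_relations :: "((real \<Rightarrow> real) \<times> (real \<Rightarrow> real) \<Rightarrow> rat) set" where
  "wedge_relations =
     {(\<lambda>q. fsingle (cmul f g, h) q - fsingle (f, h) q - fsingle (g, h) q) | f g h.
         f \<in> Cset \<and> g \<in> Cset \<and> h \<in> Cset}
   \<union> {(\<lambda>q. fsingle (f, cmul g h) q - fsingle (f, g) q - fsingle (f, h) q) | f g h.
         f \<in> Cset \<and> g \<in> Cset \<and> h \<in> Cset}
   \<union> {fsingle (h, h) | h. h \<in> Cset}"

definition rat_span :: "('a \<Rightarrow> rat) set \<Rightarrow> ('a \<Rightarrow> rat) set" where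
  "rat_span S = {v. \<exists>(n::nat) (a::nat \<Rightarrow> rat) r. (\<forall>i<n. r i \<in> S) \<and>
                        v = (\<lambda>q. \<Sum>i<n. a i * r i q)}"

(* sum_{l<M} c_l (y_l wedge w_l) = 0 in wedge^2 C  (all y_l, w_l assumed in C) *)
definition wedge_sum_zero ::
  "nat \<Rightarrow> (nat \<Rightarrow> rat) \<Rightarrow> (nat \<Rightarrow> real \<Rightarrow> real) \<Rightarrow> (nat \<Rightarrow> real \<Rightarrow> real) \<Rightarrow> bool" where
  "wedge_sum_zero M c u w \<longleftrightarrow>
     (\<lambda>q. \<Sum>l<M. c l * fsingle (u l, w l) q) \<in> rat_span wedge_relations"

definition Ltilde :: "real poly \<Rightarrow> real \<Rightarrow> real" where
  "Ltilde P x = 1/2 * integral {0..x}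
      (\<lambda>y. ln (poly P y) / y - ln y / poly P y * poly (pderiv P) y)"

definition polyfam :: "real poly \<Rightarrow> (real \<Rightarrow> real) \<Rightarrow> nat \<Rightarrow> real \<Rightarrow> real poly" where
  "polyfam Q p s z = Q + monom (p z) s"

end

theory Submission
  imports Defs "HOL-Real_Asymp.Real_Asymp"
begin

(* With J_P(x) = \<integral>_0^x ln P(y)/y dy one has L~_P(x) = J_P(x) - 1/2 ln x ln P(x).
   Differentiating L~_{P_z}(y(z)) in z, the Leibniz rule applied to J contributes
   p'(z) \<integral>_0^y(z) y^(s-1)/P_z(y) dy, and all remaining terms combine to
   1/2 (ln W dlog y - ln y dlog W) with W = P_z(y(z)).  The assignment
   f \<wedge> g \<mapsto> ln g dlog f - ln f dlog g is additive in both factors and alternating, so it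
   factors through the exterior square of C, and the hypothesis makes the sum of these
   terms vanish. *)

section \<open>Maps factoring through the exterior square\<close>

definition alternating_bimultiplicative ::
    "((real \<Rightarrow> real) \<Rightarrow> (real \<Rightarrow> real) \<Rightarrow> real) \<Rightarrow> bool" where
  "alternating_bimultiplicative \<phi> \<longleftrightarrow>
     (\<forall>f\<in>Cset. \<forall>g\<in>Cset. \<forall>h\<in>Cset. \<phi> (cmul f g) h = \<phi> f h + \<phi> g h) \<and>
     (\<forall>f\<in>Cset. \<forall>g\<in>Cset. \<forall>h\<in>Cset. \<phi> f (cmul g h) = \<phi> f g + \<phi> f h) \<and>
     (\<forall>h\<in>Cset. \<phi> h h = 0)"

lemma wedge_relationsE:
  assumes "r \<in> wedge_relations"
  obtains (mult_left) f g h where "f \<in> Cset" "g \<in> Cset" "h \<in> Cset"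
      "r = (\<lambda>q. fsingle (cmul f g, h) q - fsingle (f, h) q - fsingle (g, h) q)"
    | (mult_right) f g h where "f \<in> Cset" "g \<in> Cset" "h \<in> Cset"
      "r = (\<lambda>q. fsingle (f, cmul g h) q - fsingle (f, g) q - fsingle (f, h) q)"
    | (diag) h where "h \<in> Cset" "r = fsingle (h, h)"
  using assms unfolding wedge_relations_def by blast

lemma finite_support_wedge_relation:
  assumes "r \<in> wedge_relations"
  shows "finite {q. r q \<noteq> 0}"
  using assms
proof (cases rule: wedge_relationsE)
  case (mult_left f g h)
  show ?thesis
    by (rule finite_subset[of _ "{(cmul f g, h), (f, h), (g, h)}"]) (auto simp: mult_left(4) fsingle_def)
next
  case (mult_right f g h)
  show ?thesis
    by (rule finite_subset[of _ "{(f, cmul g h), (f, g), (f, h)}"]) (auto simp: mult_right(4) fsingle_def)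
next
  case (diag h)
  show ?thesis
    by (rule finite_subset[of _ "{(h, h)}"]) (auto simp: diag(2) fsingle_def)
qed

lemma sum_of_rat_fsingle:
  assumes "finite S" "a \<in> S"
  shows "(\<Sum>q\<in>S. of_rat (fsingle a q) * \<psi> q) = (\<psi> a :: real)"
  using assms by (simp add: fsingle_def if_distrib[of of_rat] if_distrib[of "\<lambda>x. x * _"] cong: if_cong)

lemma alternating_bimultiplicative_sum_wedge_relation:
  assumes \<phi>: "alternating_bimultiplicative \<phi>" and r: "r \<in> wedge_relations"
    and S: "finite S" "{q. r q \<noteq> 0} \<subseteq> S"
  shows "(\<Sum>q\<in>S. of_rat (r q) * case_prod \<phi> q) = 0"
proof -
  have restrict: "(\<Sum>q\<in>S. of_rat (r q) * case_prod \<phi> q) = (\<Sum>q\<in>T. of_rat (r q) * case_prod \<phi> q)"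
    if "finite T" "{q. r q \<noteq> 0} \<subseteq> T" for T
    by (rule sum.mono_neutral_cong) (use S that in auto)
  from r show ?thesis
  proof (cases rule: wedge_relationsE)
    case (mult_left f g h)
    have "(\<Sum>q\<in>S. of_rat (r q) * case_prod \<phi> q)
        = (\<Sum>q\<in>{(cmul f g, h), (f, h), (g, h)}. of_rat (r q) * case_prod \<phi> q)"
      by (rule restrict) (auto simp: mult_left(4) fsingle_def)
    also have "\<dots> = \<phi> (cmul f g) h - \<phi> f h - \<phi> g h"
      by (simp add: mult_left(4) of_rat_diff left_diff_distrib sum_subtractf sum_of_rat_fsingle)
    also have "\<dots> = 0"
      using \<phi> mult_left(1-3) by (simp add: alternating_bimultiplicative_def)
    finally show ?thesis .
  next
    case (mult_right f g h)
    have "(\<Sum>q\<in>S. of_rat (r q) * case_prod \<phi> q)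
        = (\<Sum>q\<in>{(f, cmul g h), (f, g), (f, h)}. of_rat (r q) * case_prod \<phi> q)"
      by (rule restrict) (auto simp: mult_right(4) fsingle_def)
    also have "\<dots> = \<phi> f (cmul g h) - \<phi> f g - \<phi> f h"
      by (simp add: mult_right(4) of_rat_diff left_diff_distrib sum_subtractf sum_of_rat_fsingle)
    also have "\<dots> = 0"
      using \<phi> mult_right(1-3) by (simp add: alternating_bimultiplicative_def)
    finally show ?thesis .
  next
    case (diag h)
    have "(\<Sum>q\<in>S. of_rat (r q) * case_prod \<phi> q) = (\<Sum>q\<in>{(h, h)}. of_rat (r q) * case_prod \<phi> q)"
      by (rule restrict) (auto simp: diag(2) fsingle_def)
    also have "\<dots> = 0"
      using \<phi> diag by (simp add: alternating_bimultiplicative_def fsingle_def)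
    finally show ?thesis .
  qed
qed

lemma wedge_sum_zero_imp_alternating_bimultiplicative_sum_eq_0:
  assumes \<phi>: "alternating_bimultiplicative \<phi>" and w: "wedge_sum_zero M c u w"
  shows "(\<Sum>l<M. of_rat (c l) * \<phi> (u l) (w l)) = 0"
proof -
  obtain n :: nat and r a where r: "\<forall>i<n. r i \<in> wedge_relations"
    and eq: "(\<lambda>q. \<Sum>l<M. c l * fsingle (u l, w l) q) = (\<lambda>q. \<Sum>i<n. a i * r i q)"
    using w unfolding wedge_sum_zero_def rat_span_def mem_Collect_eq by blast
  define S where "S = (\<lambda>l. (u l, w l)) ` {..<M} \<union> (\<Union>i<n. {q. r i q \<noteq> 0})"
  have S: "finite S"
    using r by (auto simp: S_def intro: finite_support_wedge_relation)
  define \<Phi> where "\<Phi> v = (\<Sum>q\<in>S. of_rat (v q) * case_prod \<phi> q)"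
    for v :: "(real \<Rightarrow> real) \<times> (real \<Rightarrow> real) \<Rightarrow> rat"
  have linear: "\<Phi> (\<lambda>q. \<Sum>i<k. b i * v i q) = (\<Sum>i<k. of_rat (b i) * \<Phi> (v i))" for k b v
    by (simp add: \<Phi>_def of_rat_sum of_rat_mult sum_distrib_left sum_distrib_right mult.assoc
        sum.swap[of _ S])
  have "\<Phi> (fsingle (u l, w l)) = \<phi> (u l) (w l)" if "l < M" for l
    unfolding \<Phi>_def by (subst sum_of_rat_fsingle[OF S]) (use that in \<open>auto simp: S_def\<close>)
  then have "(\<Sum>l<M. of_rat (c l) * \<phi> (u l) (w l)) = \<Phi> (\<lambda>q. \<Sum>l<M. c l * fsingle (u l, w l) q)"
    by (simp add: linear)
  also have "\<dots> = (\<Sum>i<n. of_rat (a i) * \<Phi> (r i))"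
    by (simp add: eq linear)
  also have "\<dots> = 0"
  proof -
    have "\<Phi> (r i) = 0" if "i < n" for i
      unfolding \<Phi>_def using that r
      by (intro alternating_bimultiplicative_sum_wedge_relation[OF \<phi> _ S]) (auto simp: S_def)
    then show ?thesis by simp
  qed
  finally show ?thesis .
qed

definition wedge_dlog :: "real \<Rightarrow> (real \<Rightarrow> real) \<Rightarrow> (real \<Rightarrow> real) \<Rightarrow> real" where
  "wedge_dlog z f g = ln (g z) * deriv f z / f z - ln (f z) * deriv g z / g z"

lemma CsetD:
  assumes "f \<in> Cset" "0 < z"
  shows "0 < f z" "(f has_real_derivative deriv f z) (at z)"
  using assms by (auto simp: Cset_def DERIV_deriv_iff_real_differentiable)

lemma deriv_cmul:
  assumes "f \<in> Cset" "g \<in> Cset" "0 < z"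
  shows "deriv (cmul f g) z = deriv f z * g z + f z * deriv g z"
  using DERIV_imp_deriv[OF DERIV_mult[OF CsetD(2)[OF assms(1,3)] CsetD(2)[OF assms(2,3)]]]
  by (simp add: cmul_def mult.commute)

lemma alternating_bimultiplicative_wedge_dlog:
  assumes z: "0 < z"
  shows "alternating_bimultiplicative (wedge_dlog z)"
proof -
  have ln_cmul: "ln (cmul f g z) = ln (f z) + ln (g z)" if "f \<in> Cset" "g \<in> Cset" for f g
    using CsetD(1)[OF that(1) z] CsetD(1)[OF that(2) z] by (simp add: cmul_def ln_mult)
  show ?thesis
    unfolding alternating_bimultiplicative_def
  proof (intro conjI ballI)
    fix f g h assume C: "f \<in> Cset" "g \<in> Cset" "h \<in> Cset"
    have pos: "0 < f z" "0 < g z" "0 < h z" using CsetD(1) C z by auto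
    show "wedge_dlog z (cmul f g) h = wedge_dlog z f h + wedge_dlog z g h"
      using pos by (simp add: wedge_dlog_def deriv_cmul C z ln_cmul) (simp add: cmul_def field_simps)
    show "wedge_dlog z f (cmul g h) = wedge_dlog z f g + wedge_dlog z f h"
      using pos by (simp add: wedge_dlog_def deriv_cmul C z ln_cmul) (simp add: cmul_def field_simps)
  qed (simp add: wedge_dlog_def)
qed

lemma eventually_nhds_gt:
  fixes y :: "'a::linorder_topology"
  assumes "a < y"
  shows "\<forall>\<^sub>F u in nhds y. a < u"
  using eventually_nhds_in_open[of "{a<..}" y] assms by simp

lemma wedge_dlog_cong:
  assumes z: "0 < z" and g: "\<forall>t>0. g t = g' t"
  shows "wedge_dlog z f g = wedge_dlog z f g'"
proof -
  have "\<forall>\<^sub>F t in nhds z. g t = g' t"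
    using eventually_nhds_gt[OF z] by eventually_elim (use g in auto)
  then have "deriv g z = deriv g' z" by (rule deriv_cong_ev) simp
  then show ?thesis using z g by (simp add: wedge_dlog_def)
qed

section \<open>The function J and the derivative of L~\<close>

lemma poly_ge_coeff_0:
  fixes P :: "real poly"
  assumes "\<forall>i. 0 \<le> coeff P i" "0 \<le> y"
  shows "coeff P 0 \<le> poly P y"
proof -
  have "coeff P 0 = coeff P 0 * y ^ 0" by simp
  also have "\<dots> \<le> (\<Sum>i\<le>degree P. coeff P i * y ^ i)"
    by (rule member_le_sum[where f="\<lambda>i. coeff P i * y ^ i"]) (use assms in auto)
  finally show ?thesis by (simp add: poly_altdef)
qed

lemma one_le_poly:
  fixes P :: "real poly"
  assumes "\<forall>i. 0 \<le> coeff P i" "coeff P 0 = 1" "0 \<le> y"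
  shows "1 \<le> poly P y"
  using poly_ge_coeff_0[OF assms(1,3)] assms(2) by simp

lemma coeff_add_monom_nonneg:
  fixes Q :: "real poly"
  assumes "\<forall>i. 0 \<le> coeff Q i" "0 \<le> a"
  shows "\<forall>i. 0 \<le> coeff (Q + monom a s) i"
  using assms by (simp add: coeff_monom)

lemma coeff_0_add_monom: "1 \<le> s \<Longrightarrow> coeff (Q + monom a s) 0 = coeff Q 0"
  by (simp add: coeff_monom)

lemma one_le_poly_add_monom:
  fixes Q :: "real poly"
  assumes "\<forall>i. 0 \<le> coeff Q i" "coeff Q 0 = 1" "1 \<le> s" "0 \<le> a" "0 \<le> u"
  shows "1 \<le> poly Q u + a * u ^ s"
  using one_le_poly[OF coeff_add_monom_nonneg[OF assms(1,4)], of s u] assms(2,3,5)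
  by (simp add: coeff_0_add_monom poly_monom)

(* ln P(y) / y, continuously extended to y = 0 when P(0) = 1 *)
definition ln_poly_quot :: "real poly \<Rightarrow> real \<Rightarrow> real" where
  "ln_poly_quot P y = (if y = 0 then poly (pderiv P) 0 else ln (poly P y) / y)"

lemma isCont_ln_poly_quot:
  assumes P: "\<forall>i. 0 \<le> coeff P i" "coeff P 0 = 1" and y: "0 \<le> y"
  shows "isCont (ln_poly_quot P) y"
proof (cases "y = 0")
  case True
  have P0: "poly P 0 = 1" using P by (simp add: poly_0_coeff_0)
  have "((\<lambda>y. ln (poly P y)) has_real_derivative poly (pderiv P) 0) (at 0)"
    using P0 by (auto intro!: derivative_eq_intros)
  then have "(\<lambda>h. ln (poly P h) / h) \<midarrow>0\<rightarrow> poly (pderiv P) 0"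
    by (simp add: DERIV_def P0)
  moreover have "\<forall>\<^sub>F h in at 0. ln (poly P h) / h = ln_poly_quot P h"
    by (auto simp: ln_poly_quot_def eventually_at_filter)
  ultimately have "ln_poly_quot P \<midarrow>0\<rightarrow> ln_poly_quot P 0"
    by (auto simp: ln_poly_quot_def intro: Lim_transform_eventually)
  then show ?thesis using True by (simp add: isCont_def)
next
  case False
  then have "0 < y" using y by simp
  have cont: "isCont (\<lambda>y. ln (poly P y) / y) y"
    using \<open>0 < y\<close> one_le_poly[OF P y] by (auto intro!: continuous_intros)
  have "\<forall>\<^sub>F x in nhds y. ln_poly_quot P x = ln (poly P x) / x"
    using eventually_nhds_gt[OF \<open>0 < y\<close>]
    by eventually_elim (simp add: ln_poly_quot_def)
  then have "isCont (ln_poly_quot P) y = isCont (\<lambda>y. ln (poly P y) / y) y"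
    by (rule isCont_cong)
  with cont show ?thesis by simp
qed

lemma continuous_on_ln_poly_quot:
  assumes "\<forall>i. 0 \<le> coeff P i" "coeff P 0 = 1"
  shows "continuous_on {0..} (ln_poly_quot P)"
  using isCont_ln_poly_quot[OF assms] by (auto intro!: continuous_at_imp_continuous_on)

definition ln_poly_integral :: "real poly \<Rightarrow> real \<Rightarrow> real" where
  "ln_poly_integral P x = integral {0..x} (ln_poly_quot P)"

lemma ln_poly_integral_has_derivative:
  assumes P: "\<forall>i. 0 \<le> coeff P i" "coeff P 0 = 1" and x: "0 \<le> x"
  shows "(ln_poly_integral P has_real_derivative ln_poly_quot P x) (at x within {0..})"
proof -
  have "continuous_on {0..x+1} (ln_poly_quot P)"
    by (rule continuous_on_subset[OF continuous_on_ln_poly_quot[OF P]]) auto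
  then have "(ln_poly_integral P has_vector_derivative ln_poly_quot P x) (at x within {0..x+1})"
    unfolding ln_poly_integral_def by (rule integral_has_vector_derivative) (use x in auto)
  moreover have "at x within {0..x+1} = at x within {0..}"
    by (rule at_within_nhd[where S="{..<x+1}"]) auto
  ultimately show ?thesis
    by (simp add: has_real_derivative_iff_has_vector_derivative)
qed

lemma continuous_on_x_ln_x: "continuous_on {0..} (\<lambda>y::real. y * ln y)"
proof -
  have "continuous (at y within {0..}) (\<lambda>y::real. y * ln y)" if y: "0 \<le> y" for y
  proof (cases "y = 0")
    case True
    have "((\<lambda>x::real. x * ln x) \<longlongrightarrow> 0) (at_right 0)" by real_asymp
    then show ?thesis using True by (simp add: continuous_within at_within_Ici_at_right)
  next
    case False
    then have "isCont (\<lambda>y::real. y * ln y) y" using y by (auto intro!: continuous_intros)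
    then show ?thesis by (rule continuous_at_imp_continuous_within)
  qed
  then show ?thesis by (simp add: continuous_on_eq_continuous_within)
qed

lemma Ltilde_antiderivative_has_derivative:
  assumes P: "\<forall>i. 0 \<le> coeff P i" "coeff P 0 = 1" and y: "0 < y"
  shows "((\<lambda>y. ln_poly_integral P y - 1/2 * ln y * ln (poly P y)) has_real_derivative
           1/2 * (ln (poly P y) / y - ln y / poly P y * poly (pderiv P) y)) (at y)"
proof -
  have Py: "0 < poly P y" using one_le_poly[OF P, of y] y by simp
  have "(ln_poly_integral P has_real_derivative ln_poly_quot P y) (at y)"
    using ln_poly_integral_has_derivative[OF P, of y] at_within_interior[of y "{0..}"] y by simp
  then have "((\<lambda>y. ln_poly_integral P y - 1/2 * ln y * ln (poly P y)) has_real_derivative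
      ln_poly_quot P y - 1/2 * (1 / y * ln (poly P y) + ln y * (poly (pderiv P) y / poly P y))) (at y)"
    using y Py by (auto intro!: derivative_eq_intros) (simp add: field_simps)
  also have "ln_poly_quot P y - 1/2 * (1 / y * ln (poly P y) + ln y * (poly (pderiv P) y / poly P y))
      = 1/2 * (ln (poly P y) / y - ln y / poly P y * poly (pderiv P) y)"
    using y by (simp add: ln_poly_quot_def field_simps)
  finally show ?thesis .
qed

lemma Ltilde_eq_ln_poly_integral:
  assumes P: "\<forall>i. 0 \<le> coeff P i" "coeff P 0 = 1" and x: "0 < x"
  shows "Ltilde P x = ln_poly_integral P x - 1/2 * ln x * ln (poly P x)"
proof -
  define f where "f = (\<lambda>y. ln (poly P y) / y - ln y / poly P y * poly (pderiv P) y)"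
  (* K extends the antiderivative continuously to y = 0, because y ln y \<rightarrow> 0 there *)
  define K where "K y = ln_poly_integral P y - 1/2 * ((y * ln y) * ln_poly_quot P y)" for y
  have K_pos: "K y = ln_poly_integral P y - 1/2 * ln y * ln (poly P y)" if "0 < y" for y
    using that by (simp add: K_def ln_poly_quot_def)
  have "continuous_on {0..} (ln_poly_integral P)"
    unfolding continuous_on_eq_continuous_within
    using ln_poly_integral_has_derivative[OF P] DERIV_continuous by blast
  then have "continuous_on {0..} K"
    unfolding K_def
    by (intro continuous_on_diff continuous_on_mult[OF continuous_on_const]
        continuous_on_mult[OF continuous_on_x_ln_x continuous_on_ln_poly_quot[OF P]])
  then have K_cont: "continuous_on {0..x} K"
    by (rule continuous_on_subset) auto
  have K_deriv: "(K has_vector_derivative 1/2 * f y) (at y)" if "y \<in> {0<..<x}" for y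
  proof -
    have "0 < y" using that by simp
    have "\<forall>\<^sub>F u in nhds y. K u = ln_poly_integral P u - 1/2 * ln u * ln (poly P u)"
      using eventually_nhds_gt[OF \<open>0 < y\<close>] by eventually_elim (rule K_pos)
    then have "(K has_real_derivative 1/2 * f y) (at y)"
      using Ltilde_antiderivative_has_derivative[OF P \<open>0 < y\<close>]
      by (subst DERIV_cong_ev) (auto simp: f_def)
    then show ?thesis by (simp add: has_real_derivative_iff_has_vector_derivative)
  qed
  have "((\<lambda>y. 1/2 * f y) has_integral K x - K 0) {0..x}"
    using x by (intro fundamental_theorem_of_calculus_interior[OF _ K_cont K_deriv]) auto
  then have "((\<lambda>y. 2 * (1/2 * f y)) has_integral 2 * (K x - K 0)) {0..x}"
    by (rule has_integral_mult_right)
  moreover have "K 0 = 0" by (simp add: K_def ln_poly_integral_def)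
  ultimately have "(f has_integral 2 * K x) {0..x}" by simp
  then have "integral {0..x} f = 2 * K x" by (rule integral_unique)
  then have "Ltilde P x = K x" by (simp add: Ltilde_def f_def)
  then show ?thesis using K_pos[OF x] by simp
qed

lemma ln_poly_quot_add_monom_has_derivative:
  assumes Q: "\<forall>i. 0 \<le> coeff Q i" "coeff Q 0 = 1" and s: "1 \<le> s"
    and a: "0 \<le> a" and u: "0 \<le> u"
  shows "((\<lambda>a. ln_poly_quot (Q + monom a s) u) has_real_derivative
           u ^ (s - 1) / poly (Q + monom a s) u) (at a)"
proof (cases "u = 0")
  case True
  have "((\<lambda>a. coeff Q 1 + (if s = 1 then a else 0)) has_real_derivative (if s = 1 then 1 else 0)) (at a)"
    by (cases "s = 1") (auto intro!: derivative_eq_intros)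
  moreover have "0 ^ (s - 1) / poly (Q + monom a s) 0 = (if s = 1 then 1 else (0::real))"
    using s Q by (cases "s = 1") (simp_all add: poly_0_coeff_0 coeff_monom)
  ultimately show ?thesis
    using True by (simp add: ln_poly_quot_def poly_0_coeff_0 coeff_pderiv coeff_monom)
next
  case False
  then have "0 < u" using u by simp
  have pos: "0 < poly Q u + a * u ^ s"
    using one_le_poly_add_monom[OF Q s a u] by simp
  have "((\<lambda>a. ln (poly Q u + a * u ^ s) / u) has_real_derivative u ^ s / (poly Q u + a * u ^ s) / u) (at a)"
    using pos \<open>0 < u\<close> by (auto intro!: derivative_eq_intros)
  moreover have "u ^ s / (poly Q u + a * u ^ s) / u = u ^ (s - 1) / (poly Q u + a * u ^ s)"
    using \<open>0 < u\<close> s by (simp add: power_diff)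
  ultimately show ?thesis
    using False by (simp add: ln_poly_quot_def poly_monom)
qed

lemma ln_poly_integral_add_monom_has_derivative_coeff:
  assumes Q: "\<forall>i. 0 \<le> coeff Q i" "coeff Q 0 = 1" and s: "1 \<le> s"
    and a: "0 \<le> a" and x: "0 \<le> x"
  shows "((\<lambda>a. ln_poly_integral (Q + monom a s) x) has_real_derivative
           integral {0..x} (\<lambda>u. u ^ (s - 1) / poly (Q + monom a s) u)) (at a within {0..})"
proof -
  have "((\<lambda>a. integral (cbox 0 x) (ln_poly_quot (Q + monom a s))) has_real_derivative
        integral (cbox 0 x) (\<lambda>u. u ^ (s - 1) / poly (Q + monom a s) u)) (at a within {0..})"
  proof (rule leibniz_rule_field_derivative[where fx="\<lambda>b u. u ^ (s - 1) / poly (Q + monom b s) u"])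
    fix b u :: real assume "b \<in> {0..}" "u \<in> cbox 0 x"
    then show "((\<lambda>b. ln_poly_quot (Q + monom b s) u) has_real_derivative
        u ^ (s - 1) / poly (Q + monom b s) u) (at b within {0..})"
      using ln_poly_quot_add_monom_has_derivative[OF Q s] by (auto intro: has_field_derivative_at_within)
  next
    fix b :: real assume "b \<in> {0..}"
    then show "ln_poly_quot (Q + monom b s) integrable_on cbox 0 x"
      using Q s
      by (intro integrable_continuous continuous_on_subset[OF continuous_on_ln_poly_quot])
        (auto simp: coeff_add_monom_nonneg coeff_0_add_monom)
  next
    have "poly Q u + b * u ^ s \<noteq> 0" if "b \<ge> 0" "u \<ge> 0" for b u
      using one_le_poly_add_monom[OF Q s that] by simp
    then show "continuous_on ({0..} \<times> cbox 0 x) (\<lambda>(b, u). u ^ (s - 1) / poly (Q + monom b s) u)"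
      by (auto simp: poly_monom case_prod_beta intro!: continuous_intros)
  qed (use a in auto)
  then show ?thesis by (simp add: ln_poly_integral_def)
qed

lemma ln_poly_integral_add_monom_has_derivative:
  assumes Q: "\<forall>i. 0 \<le> coeff Q i" "coeff Q 0 = 1" and s: "1 \<le> s"
    and a: "0 \<le> a" and x: "0 < x"
  shows "((\<lambda>(b, v). ln_poly_integral (Q + monom b s) v) has_derivative
           (\<lambda>(db, dv). integral {0..x} (\<lambda>u. u ^ (s - 1) / poly (Q + monom a s) u) * db
                       + ln_poly_quot (Q + monom a s) x * dv))
         (at (a, x) within {0..} \<times> {0<..})"
proof -
  have "continuous_on ({0..} \<times> {0<..})
      (\<lambda>(b, v). blinfun_mult_right (ln (poly Q v + b * v ^ s) / v))"
  proof -
    have "0 < poly Q v + b * v ^ s" if "b \<ge> 0" "v > 0" for b v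
      using one_le_poly_add_monom[OF Q s, of b v] that by simp
    then show ?thesis by (auto simp: case_prod_beta intro!: continuous_intros) (metis less_irrefl)
  qed
  then have cont: "continuous_on ({0..} \<times> {0<..})
      (\<lambda>(b, v). blinfun_mult_right (ln_poly_quot (Q + monom b s) v))"
    by (rule continuous_on_eq) (auto simp: ln_poly_quot_def poly_monom)
  show ?thesis
  proof (rule has_derivative_partialsI[where fy="\<lambda>b v. blinfun_mult_right (ln_poly_quot (Q + monom b s) v)",
        unfolded blinfun_mult_right.rep_eq])
    show "((\<lambda>b. ln_poly_integral (Q + monom b s) x) has_derivative
        (\<lambda>db. integral {0..x} (\<lambda>u. u ^ (s - 1) / poly (Q + monom a s) u) * db)) (at a within {0..})"
      using ln_poly_integral_add_monom_has_derivative_coeff[OF Q s a] x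
      by (simp add: has_field_derivative_def)
  next
    fix b v :: real assume "b \<in> {0..}" "v \<in> {0<..}"
    then have "(ln_poly_integral (Q + monom b s) has_real_derivative ln_poly_quot (Q + monom b s) v)
        (at v within {0<..})"
      using Q s
      by (intro has_field_derivative_subset[OF ln_poly_integral_has_derivative])
        (auto simp: coeff_add_monom_nonneg coeff_0_add_monom)
    then show "(ln_poly_integral (Q + monom b s) has_derivative
        (*) (ln_poly_quot (Q + monom b s) v)) (at v within {0<..})"
      by (simp add: has_field_derivative_def)
  next
    show "continuous (at (a, x) within {0..} \<times> {0<..})
        (\<lambda>(b, v). blinfun_mult_right (ln_poly_quot (Q + monom b s) v))"
      using cont a x by (simp add: continuous_on_eq_continuous_within)
  qed (use x in auto)
qed

lemma ln_poly_integral_polyfam_has_derivative: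
  assumes Q: "\<forall>i. 0 \<le> coeff Q i" "coeff Q 0 = 1" and s: "1 \<le> s"
    and \<alpha>: "\<forall>t>0. 0 \<le> \<alpha> t" and y: "\<forall>t>0. 0 < y t" and z: "0 < z"
    and d\<alpha>: "(\<alpha> has_real_derivative \<alpha>') (at z)" and dy: "(y has_real_derivative y') (at z)"
  shows "((\<lambda>t. ln_poly_integral (polyfam Q \<alpha> s t) (y t)) has_real_derivative
           \<alpha>' * integral {0..y z} (\<lambda>u. u ^ (s - 1) / poly (polyfam Q \<alpha> s z) u)
           + y' * ln_poly_quot (polyfam Q \<alpha> s z) (y z)) (at z)"
proof -
  define I where "I = integral {0..y z} (\<lambda>u. u ^ (s - 1) / poly (polyfam Q \<alpha> s z) u)"
  define q where "q = ln_poly_quot (polyfam Q \<alpha> s z) (y z)"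
  have "(\<alpha> has_real_derivative \<alpha>') (at z within {0<..})" "(y has_real_derivative y') (at z within {0<..})"
    using d\<alpha> dy by (auto intro: has_field_derivative_at_within)
  then have "((\<lambda>t. (\<alpha> t, y t)) has_derivative (\<lambda>h. (\<alpha>' * h, y' * h))) (at z within {0<..})"
    unfolding has_field_derivative_def by (rule has_derivative_Pair)
  moreover have "((\<lambda>(b, v). ln_poly_integral (Q + monom b s) v) has_derivative (\<lambda>(db, dv). I * db + q * dv))
      (at (\<alpha> z, y z) within (\<lambda>t. (\<alpha> t, y t)) ` {0<..})"
  proof (rule has_derivative_subset)
    show "((\<lambda>(b, v). ln_poly_integral (Q + monom b s) v) has_derivative (\<lambda>(db, dv). I * db + q * dv))
        (at (\<alpha> z, y z) within {0..} \<times> {0<..})"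
      unfolding I_def q_def polyfam_def using \<alpha> y z
      by (intro ln_poly_integral_add_monom_has_derivative[OF Q s]) auto
    show "(\<lambda>t. (\<alpha> t, y t)) ` {0<..} \<subseteq> {0..} \<times> {0<..}"
      using \<alpha> y by auto
  qed
  ultimately have "((\<lambda>(b, v). ln_poly_integral (Q + monom b s) v) \<circ> (\<lambda>t. (\<alpha> t, y t)) has_derivative
      (\<lambda>(db, dv). I * db + q * dv) \<circ> (\<lambda>h. (\<alpha>' * h, y' * h))) (at z within {0<..})"
    by (rule diff_chain_within)
  moreover have "(\<lambda>(b, v). ln_poly_integral (Q + monom b s) v) \<circ> (\<lambda>t. (\<alpha> t, y t))
      = (\<lambda>t. ln_poly_integral (polyfam Q \<alpha> s t) (y t))"
    by (simp add: fun_eq_iff polyfam_def)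
  moreover have "(\<lambda>(db, dv). I * db + q * dv) \<circ> (\<lambda>h. (\<alpha>' * h, y' * h)) = (*) (\<alpha>' * I + y' * q)"
    by (simp add: fun_eq_iff algebra_simps)
  moreover have "at z within {0<..} = at z"
    using z by (intro at_within_open) auto
  ultimately show ?thesis
    by (simp add: has_field_derivative_def I_def q_def)
qed

lemma Ltilde_polyfam_has_derivative_pos_exponent:
  assumes Q: "\<forall>i. 0 \<le> coeff Q i" "coeff Q 0 = 1" and s: "1 \<le> s"
    and \<alpha>: "\<forall>t>0. 0 \<le> \<alpha> t" and y: "\<forall>t>0. 0 < y t" and z: "0 < z"
    and d\<alpha>: "\<alpha> differentiable (at z)" and dy: "y differentiable (at z)"
  shows "((\<lambda>t. Ltilde (polyfam Q \<alpha> s t) (y t)) has_real_derivative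
           deriv \<alpha> z * integral {0..y z} (\<lambda>u. u ^ (s - 1) / poly (polyfam Q \<alpha> s z) u)
           + 1/2 * wedge_dlog z y (\<lambda>t. poly (polyfam Q \<alpha> s t) (y t))) (at z)"
proof -
  define I where "I = integral {0..y z} (\<lambda>u. u ^ (s - 1) / poly (polyfam Q \<alpha> s z) u)"
  define W where "W = (\<lambda>t. poly (polyfam Q \<alpha> s t) (y t))"
  have d\<alpha>': "(\<alpha> has_real_derivative deriv \<alpha> z) (at z)" and dy': "(y has_real_derivative deriv y z) (at z)"
    using d\<alpha> dy by (simp_all add: DERIV_deriv_iff_real_differentiable)
  have "((\<lambda>t. poly Q (y t) + \<alpha> t * y t ^ s) has_real_derivative
      poly (pderiv Q) (y z) * deriv y z + (deriv \<alpha> z * y z ^ s + \<alpha> z * (s * y z ^ (s - 1) * deriv y z)))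
      (at z)"
    by (auto intro!: derivative_eq_intros d\<alpha>' dy')
  then have "W differentiable (at z)"
    unfolding W_def polyfam_def poly_add poly_monom real_differentiable_def by blast
  then have dW: "(W has_real_derivative deriv W z) (at z)"
    by (simp add: DERIV_deriv_iff_real_differentiable)
  have yz: "0 < y z" and Wz: "1 \<le> W z"
    using one_le_poly_add_monom[OF Q s, of "\<alpha> z" "y z"] \<alpha> y z
    by (auto simp: W_def polyfam_def poly_monom)
  have ev: "\<forall>\<^sub>F t in nhds z. Ltilde (polyfam Q \<alpha> s t) (y t)
      = ln_poly_integral (polyfam Q \<alpha> s t) (y t) - 1/2 * ln (y t) * ln (W t)"
    using eventually_nhds_gt[OF z]
  proof eventually_elim
    case (elim t)
    show ?case
      unfolding W_def polyfam_def
      by (rule Ltilde_eq_ln_poly_integral)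
        (use Q s \<alpha> y elim in \<open>simp_all add: coeff_add_monom_nonneg coeff_0_add_monom\<close>)
  qed
  have D: "((\<lambda>t. ln_poly_integral (polyfam Q \<alpha> s t) (y t) - 1/2 * ln (y t) * ln (W t))
      has_real_derivative (deriv \<alpha> z * I + deriv y z * ln_poly_quot (polyfam Q \<alpha> s z) (y z))
        - 1/2 * (deriv y z / y z * ln (W z) + ln (y z) * (deriv W z / W z))) (at z)"
    using yz Wz
    by (auto intro!: derivative_eq_intros dy' dW
        ln_poly_integral_polyfam_has_derivative[OF Q s \<alpha> y z d\<alpha>' dy', folded I_def])
      (simp add: mult_ac)
  have eq: "(deriv \<alpha> z * I + deriv y z * ln_poly_quot (polyfam Q \<alpha> s z) (y z))
        - 1/2 * (deriv y z / y z * ln (W z) + ln (y z) * (deriv W z / W z))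
      = deriv \<alpha> z * I + 1/2 * wedge_dlog z y W"
    using yz by (simp add: ln_poly_quot_def wedge_dlog_def W_def field_simps)
  show ?thesis
    using DERIV_cong_ev[OF refl ev eq[symmetric]] D by (simp add: I_def W_def)
qed

lemma Ltilde_polyfam_has_derivative_exponent_0:
  assumes Q: "\<forall>i. 0 \<le> coeff Q i" and p: "\<forall>t>0. 0 \<le> p t"
    and at0: "\<forall>t>0. poly (polyfam Q p 0 t) 0 = 1"
    and y: "\<forall>t>0. 0 < y t" and z: "0 < z" and dy: "y differentiable (at z)"
  shows "deriv p z = 0"
    and "((\<lambda>t. Ltilde (polyfam Q p 0 t) (y t)) has_real_derivative
           1/2 * wedge_dlog z y (\<lambda>t. poly (polyfam Q p 0 t) (y t))) (at z)"
proof -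
  (* p is the constant 1 - coeff Q 0, which we absorb into Q *)
  define P where "P = Q + [:1 - coeff Q 0:]"
  have p_eq: "p t = 1 - coeff Q 0" if "0 < t" for t
    using at0 that by (force simp: polyfam_def poly_0_coeff_0)
  have polyfam_eq: "polyfam Q p 0 t = polyfam P (\<lambda>_. 0) 1 t" if "0 < t" for t
    using p_eq[OF that] by (simp add: polyfam_def P_def monom_0)
  have P: "\<forall>i. 0 \<le> coeff P i" "coeff P 0 = 1"
    using Q p p_eq z by (auto simp: P_def coeff_pCons split: nat.split)
  have "deriv p z = deriv (\<lambda>_. 1 - coeff Q 0) z"
    using eventually_nhds_gt[OF z] by (intro deriv_cong_ev) (auto elim!: eventually_mono simp: p_eq)
  then show "deriv p z = 0" by simp
  have "wedge_dlog z y (\<lambda>t. poly (polyfam Q p 0 t) (y t))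
      = wedge_dlog z y (\<lambda>t. poly (polyfam P (\<lambda>_. 0) 1 t) (y t))"
    using z polyfam_eq by (intro wedge_dlog_cong) auto
  moreover have ev: "\<forall>\<^sub>F t in nhds z.
      Ltilde (polyfam Q p 0 t) (y t) = Ltilde (polyfam P (\<lambda>_. 0) 1 t) (y t)"
    using eventually_nhds_gt[OF z] by eventually_elim (simp add: polyfam_eq)
  moreover have "((\<lambda>t. Ltilde (polyfam P (\<lambda>_. 0) 1 t) (y t)) has_real_derivative
      0 * integral {0..y z} (\<lambda>u. u ^ (1 - 1) / poly (polyfam P (\<lambda>_. 0) 1 z) u)
      + 1/2 * wedge_dlog z y (\<lambda>t. poly (polyfam P (\<lambda>_. 0) 1 t) (y t))) (at z)"
    using Ltilde_polyfam_has_derivative_pos_exponent[where \<alpha>="\<lambda>_. 0", OF P order.refl _ y z _ dy]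
    by simp
  ultimately show "((\<lambda>t. Ltilde (polyfam Q p 0 t) (y t)) has_real_derivative
      1/2 * wedge_dlog z y (\<lambda>t. poly (polyfam Q p 0 t) (y t))) (at z)"
    using DERIV_cong_ev[OF refl ev refl] by simp
qed

lemma Ltilde_polyfam_has_derivative:
  assumes Q: "\<forall>i. 0 \<le> coeff Q i" and p: "\<forall>t>0. 0 \<le> p t" "\<forall>t>0. p differentiable (at t)"
    and at0: "\<forall>t>0. poly (polyfam Q p s t) 0 = 1" and y: "y \<in> Cset" and z: "0 < z"
  shows "((\<lambda>t. Ltilde (polyfam Q p s t) (y t)) has_real_derivative
           deriv p z * integral {0..y z} (\<lambda>u. u powi (int s - 1) / poly (polyfam Q p s z) u)
           + 1/2 * wedge_dlog z y (cnorm (\<lambda>t. poly (polyfam Q p s t) (y t)))) (at z)"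
proof -
  have y_pos: "\<forall>t>0. 0 < y t" and dy: "y differentiable (at z)"
    using y z by (auto simp: Cset_def)
  have "wedge_dlog z y (cnorm (\<lambda>t. poly (polyfam Q p s t) (y t)))
      = wedge_dlog z y (\<lambda>t. poly (polyfam Q p s t) (y t))"
    using z by (intro wedge_dlog_cong) (auto simp: cnorm_def)
  moreover have "((\<lambda>t. Ltilde (polyfam Q p s t) (y t)) has_real_derivative
           deriv p z * integral {0..y z} (\<lambda>u. u powi (int s - 1) / poly (polyfam Q p s z) u)
           + 1/2 * wedge_dlog z y (\<lambda>t. poly (polyfam Q p s t) (y t))) (at z)"
  proof (cases "s = 0")
    case True
    then show ?thesis
      using Ltilde_polyfam_has_derivative_exponent_0[OF Q p(1) _ y_pos z dy] at0 by simp
  next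
    case False
    then have s: "1 \<le> s" by simp
    have Q0: "coeff Q 0 = 1"
      using at0 z s by (auto simp: polyfam_def poly_0_coeff_0 coeff_monom)
    have "u powi (int s - 1) = u ^ (s - 1)" for u :: real
      using s by (simp add: of_nat_diff flip: power_int_of_nat)
    then show ?thesis
      using Ltilde_polyfam_has_derivative_pos_exponent[OF Q Q0 s p(1) y_pos z _ dy] p(2) z by simp
  qed
  ultimately show ?thesis by simp
qed

theorem mainTheorem9:
  fixes M :: nat and Q :: "nat \<Rightarrow> real poly" and s :: "nat \<Rightarrow> nat"
    and p :: "nat \<Rightarrow> real \<Rightarrow> real" and y :: "nat \<Rightarrow> real \<Rightarrow> real"
    and c :: "nat \<Rightarrow> rat" and z :: real
  assumes coeff_s: "\<forall>l<M. coeff (Q l) (s l) = 0"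
    and coeff_nonneg: "\<forall>l<M. \<forall>i. 0 \<le> coeff (Q l) i"
    and p_nonneg: "\<forall>l<M. \<forall>t>0. 0 \<le> p l t"
    and p_diff: "\<forall>l<M. \<forall>t>0. p l differentiable (at t)"
    and monic: "\<forall>l<M. \<forall>t>0. lead_coeff (polyfam (Q l) (p l) (s l) t) = 1"
    and at0: "\<forall>l<M. \<forall>t>0. poly (polyfam (Q l) (p l) (s l) t) 0 = 1"
    and yC: "\<forall>l<M. y l \<in> Cset"
    and wedge: "wedge_sum_zero M c y
                  (\<lambda>l. cnorm (\<lambda>t. poly (polyfam (Q l) (p l) (s l) t) (y l t)))"
    and z: "0 < z"
  shows "((\<lambda>t. \<Sum>l<M. real_of_rat (c l) * Ltilde (polyfam (Q l) (p l) (s l) t) (y l t))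
          has_real_derivative
          (\<Sum>l<M. real_of_rat (c l) * deriv (p l) z *
              integral {0..y l z}
                (\<lambda>u. u powi (int (s l) - 1) / poly (polyfam (Q l) (p l) (s l) z) u)))
         (at z)"
proof -
  define W where "W l = cnorm (\<lambda>t. poly (polyfam (Q l) (p l) (s l) t) (y l t))" for l
  define I where "I l = integral {0..y l z}
    (\<lambda>u. u powi (int (s l) - 1) / poly (polyfam (Q l) (p l) (s l) z) u)" for l
  have "((\<lambda>t. \<Sum>l<M. real_of_rat (c l) * Ltilde (polyfam (Q l) (p l) (s l) t) (y l t))
      has_real_derivative
      (\<Sum>l<M. real_of_rat (c l) * (deriv (p l) z * I l + 1/2 * wedge_dlog z (y l) (W l)))) (at z)"
    unfolding I_def W_def
    by (intro DERIV_sum DERIV_cmult Ltilde_polyfam_has_derivative)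
      (use coeff_nonneg p_nonneg p_diff at0 yC z in auto)
  moreover have "(\<Sum>l<M. real_of_rat (c l) * wedge_dlog z (y l) (W l)) = 0"
    using wedge_sum_zero_imp_alternating_bimultiplicative_sum_eq_0[OF
        alternating_bimultiplicative_wedge_dlog[OF z] wedge]
    by (simp add: W_def)
  then have "(\<Sum>l<M. real_of_rat (c l) * (deriv (p l) z * I l + 1/2 * wedge_dlog z (y l) (W l)))
      = (\<Sum>l<M. real_of_rat (c l) * deriv (p l) z * I l)"
    by (simp add: distrib_left sum.distrib mult.assoc mult.left_commute[of "1/2"]
        flip: sum_distrib_left sum_divide_distrib)
  ultimately show ?thesis by (simp add: I_def)
qed

end
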